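(* For $j\ge1$ let $h_j=p$ if $j=p^e$ for a prime $p$ and an integer $e\ge1$, and $h_j=1$ otherwise (so $(h_j)_{j\ge1}=1,2,3,2,5,1,7,2,3,1,11,1,13,1,1,2,17,\dots$). For $n\ge1$ define the sequence $N(n)=(N(n)_i)_{i\ge0}$ by $N(n)_i=\prod_{j=1}^{n}(B_{h_j,j})_i$, where $B_{c,M}=(b_i)_{i\ge0}$ denotes the sequence with $b_i=c$ if $i\ge1$ and $M\mid i$, and $b_i=1$ otherwise. Then for every $n\ge1$, $N(n)$ is cobweb-admissible and $N(n)_i=i$ for all $1\le i\le n$. In particular $N(n)_i\to i$ for each fixed $i$ as $n\to\infty$, i.e. $N(n)$ converges termwise to the sequence of natural numbers.
   Context: Notation: $n_F\equiv F_n$. A sequence $F=(n_F)_{n\ge0}$ of natural numbers with $0_F=1$ is cobweb-admissible iff every $F$-nomial coefficient $\binom{n}{k}_F=\frac{n_F(n-1)_F\cdots(n-k+1)_F}{1_F2_F\cdots k_F}$, $0\le k\le n$, is a nonnegative integer. *)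

theory Defs
  imports "HOL-Analysis.Analysis" "HOL-Computational_Algebra.Primes"
begin

definition fnomial :: "(nat \<Rightarrow> nat) \<Rightarrow> nat \<Rightarrow> nat \<Rightarrow> rat" where
  "fnomial F n k = (\<Prod>j\<in>{n-k+1..n}. of_nat (F j)) / (\<Prod>j\<in>{1..k}. of_nat (F j))"

definition cobweb_admissible :: "(nat \<Rightarrow> nat) \<Rightarrow> bool" where
  "cobweb_admissible F \<longleftrightarrow> F 0 = 1 \<and>
     (\<forall>n k. k \<le> n \<longrightarrow> (\<exists>m::nat. fnomial F n k = of_nat m))"

definition hseq :: "nat \<Rightarrow> nat" where
  "hseq j = (if \<exists>p e. prime p \<and> e \<ge> 1 \<and> j = p ^ e
             then (THE p. prime p \<and> (\<exists>e. e \<ge> 1 \<and> j = p ^ e)) else 1)"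

definition Bseqc :: "nat \<Rightarrow> nat \<Rightarrow> nat \<Rightarrow> nat" where
  "Bseqc c M i = (if i \<ge> 1 \<and> M dvd i then c else 1)"

definition Nseq :: "nat \<Rightarrow> nat \<Rightarrow> nat" where
  "Nseq n i = (\<Prod>j\<in>{1..n}. Bseqc (hseq j) j i)"

end

theory Submission
  imports Defs "HOL-Number_Theory.Prime_Powers"
begin

(* The F-nomial coefficients are multiplicative in F: the coefficients of a
   termwise product are the products of the coefficients.  Hence cobweb-admissibility is
   preserved by termwise products over any index set.  Each single sequence B_{c,M} is
   admissible: the product of its terms over an interval (a,b] is c^(b div M - a div M), so its
   F-nomial coefficients are the powers c^(n div M - (n-k) div M - k div M), whose exponent is
   nonnegative by superadditivity of floor division.  N(n) is a finite product of such
   sequences, so it is admissible.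
   Values.  h_j is the prime of j when j is a prime power and 1 otherwise, so the product of
   h_d over all divisors d of i is the product of the primes in the prime factorisation of i,
   i.e. i itself.  For 1 <= i <= n all divisors of i lie in {1..n} and they are exactly the
   indices j contributing a factor h_j to N(n)_i; hence N(n)_i = i.  Consequently N(n)_i is
   eventually constant equal to i, which gives the termwise convergence. *)

(* F-nomial coefficients are multiplicative in the sequence; no positivity is needed since
   division by zero is zero in the rationals. *)
lemma fnomial_mult:
  "fnomial (\<lambda>i. F i * G i) n k = fnomial F n k * fnomial G n k"
  unfolding fnomial_def by (simp add: prod.distrib times_divide_times_eq)

lemma cobweb_admissible_mult:
  assumes "cobweb_admissible F" and "cobweb_admissible G"
  shows "cobweb_admissible (\<lambda>i. F i * G i)"
  unfolding cobweb_admissible_def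
proof (intro conjI allI impI)
  show "F 0 * G 0 = 1" using assms unfolding cobweb_admissible_def by simp
next
  fix n k :: nat assume "k \<le> n"
  then obtain a b :: nat where "fnomial F n k = of_nat a" "fnomial G n k = of_nat b"
    using assms unfolding cobweb_admissible_def by blast
  then have "fnomial (\<lambda>i. F i * G i) n k = of_nat (a * b)"
    by (simp add: fnomial_mult)
  then show "\<exists>m. fnomial (\<lambda>i. F i * G i) n k = of_nat m" by blast
qed

lemma cobweb_admissible_one: "cobweb_admissible (\<lambda>i. 1)"
  unfolding cobweb_admissible_def fnomial_def by (auto intro: exI[of _ 1])

(* Hence also under termwise products over any index set (an infinite product is 1). *)
lemma cobweb_admissible_prod:
  assumes "\<And>j. j \<in> J \<Longrightarrow> cobweb_admissible (F j)"
  shows "cobweb_admissible (\<lambda>i. \<Prod>j\<in>J. F j i)"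
proof (cases "finite J")
  case True
  then show ?thesis using assms
  proof (induction J rule: finite_induct)
    case empty
    then show ?case using cobweb_admissible_one by (simp only: prod.empty)
  next
    case (insert j J)
    then show ?case by (simp add: cobweb_admissible_mult)
  qed
next
  case False
  then have "(\<lambda>i. \<Prod>j\<in>J. F j i) = (\<lambda>i. 1)" by simp
  with cobweb_admissible_one show ?thesis by simp
qed

lemma Suc_div_dvd: "M dvd Suc b \<Longrightarrow> Suc b div M = Suc (b div M)"
  by (simp add: div_Suc)

lemma Suc_div_not_dvd: "\<not> M dvd Suc b \<Longrightarrow> Suc b div M = b div M"
  using div_Suc by presburger

lemma prod_Bseqc_interval:
  assumes "a \<le> b"
  shows "(\<Prod>i\<in>{a<..b}. Bseqc c M i) = c ^ (b div M - a div M)"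
  using assms
proof (induction b rule: dec_induct)
  case base
  then show ?case by simp
next
  case (step b)
  have "{a<..Suc b} = insert (Suc b) {a<..b}" using step.hyps(1) by auto
  then have "(\<Prod>i\<in>{a<..Suc b}. Bseqc c M i) = Bseqc c M (Suc b) * c ^ (b div M - a div M)"
    using step.IH by simp
  also have "\<dots> = c ^ (Suc b div M - a div M)"
  proof (cases "M dvd Suc b")
    case True
    have "a div M \<le> b div M" using step.hyps(1) by (rule div_le_mono)
    with True show ?thesis by (simp add: Bseqc_def Suc_div_dvd Suc_diff_le)
  next
    case False
    then show ?thesis by (simp add: Bseqc_def Suc_div_not_dvd)
  qed
  finally show ?case .
qed

(* Floor division is superadditive; this makes the exponents of the F-nomials of B_{c,M}
   nonnegative. *)
lemma div_add_div_le: "(a::nat) div M + b div M \<le> (a + b) div M"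
  by (subst div_add1_eq) simp

(* The F-nomial coefficient of B_{c,M} is c^e with e = n div M - (n-k) div M - k div M. *)
lemma cobweb_admissible_Bseqc: "cobweb_admissible (Bseqc c M)"
  unfolding cobweb_admissible_def
proof (intro conjI allI impI)
  show "Bseqc c M 0 = 1" by (simp add: Bseqc_def)
next
  fix n k :: nat assume "k \<le> n"
  define e where "e = n div M - (n - k) div M - k div M"
  have "(n - k) div M + k div M \<le> n div M"
    using div_add_div_le[of "n - k" M k] \<open>k \<le> n\<close> by simp
  then have exps: "n div M - (n - k) div M = e + k div M"
    unfolding e_def by simp
  have "{n-k+1..n} = {n-k<..n}" by auto
  then have num: "(\<Prod>j\<in>{n-k+1..n}. of_nat (Bseqc c M j)) = (of_nat (c ^ e * c ^ (k div M)) :: rat)"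
    using prod_Bseqc_interval[of "n - k" n c M] \<open>k \<le> n\<close>
    by (simp add: of_nat_prod[symmetric] exps power_add)
  have "{1..k} = {0<..k}" by auto
  then have den: "(\<Prod>j\<in>{1..k}. of_nat (Bseqc c M j)) = (of_nat (c ^ (k div M)) :: rat)"
    using prod_Bseqc_interval[of 0 k c M] by (simp add: of_nat_prod[symmetric])
  have "fnomial (Bseqc c M) n k = of_nat (if c ^ (k div M) = 0 then 0 else c ^ e)"
    unfolding fnomial_def num den by simp
  then show "\<exists>m. fnomial (Bseqc c M) n k = of_nat m" by blast
qed

lemma hseq_eq_aprimedivisor: "hseq j = (if primepow j then aprimedivisor j else 1)"
proof -
  have pp: "(\<exists>p e. prime p \<and> e \<ge> 1 \<and> j = p ^ e) \<longleftrightarrow> primepow j"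
    unfolding primepow_def by (auto simp: Suc_le_eq)
  have "(THE p. prime p \<and> (\<exists>e. e \<ge> 1 \<and> j = p ^ e)) = aprimedivisor j" if "primepow j"
  proof (rule the_equality)
    obtain p e where "prime p" "e > 0" "j = p ^ e" using \<open>primepow j\<close> unfolding primepow_def by blast
    then show "prime (aprimedivisor j) \<and> (\<exists>e. e \<ge> 1 \<and> j = aprimedivisor j ^ e)"
      by (auto simp: aprimedivisor_prime_power Suc_le_eq)
  next
    fix q assume "prime q \<and> (\<exists>e. e \<ge> 1 \<and> j = q ^ e)"
    then show "q = aprimedivisor j" by (auto simp: aprimedivisor_prime_power Suc_le_eq)
  qed
  then show ?thesis unfolding hseq_def pp by simp
qed

(* Multiplicative analogue of sum_{d|n} Lambda(d) = ln n: every n > 0 is the product of the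
   primes underlying its prime-power divisors. *)
lemma prod_hseq_divisors:
  assumes "(n::nat) > 0"
  shows "(\<Prod>d | d dvd n. hseq d) = n"
proof -
  have "(\<Prod>d | d dvd n. hseq d) = (\<Prod>d\<in>primepow_factors n. aprimedivisor d)"
  proof (rule prod.mono_neutral_cong_right)
    show "finite {d. d dvd n}" using assms by simp
    show "primepow_factors n \<subseteq> {d. d dvd n}" unfolding primepow_factors_def by blast
    show "\<forall>d\<in>{d. d dvd n} - primepow_factors n. hseq d = 1"
      unfolding primepow_factors_def hseq_eq_aprimedivisor using assms by auto
    show "\<And>d. d \<in> primepow_factors n \<Longrightarrow> hseq d = aprimedivisor d"
      unfolding primepow_factors_def hseq_eq_aprimedivisor by simp
  qed
  also have "\<dots> = prod_mset (image_mset aprimedivisor (mset_set (primepow_factors n)))"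
    by (rule prod_unfold_prod_mset)
  also have "\<dots> = n"
    using assms by (simp add: aprimedivisor_primepow_factors_conv_prime_factorization)
  finally show ?thesis .
qed

(* The factor B_{h_j,j} contributes h_j to N(n)_i exactly when j divides i; if i <= n, every
   divisor of i occurs, so N(n)_i is the full divisor product above. *)
lemma Nseq_eq_index:
  assumes "1 \<le> i" and "i \<le> n"
  shows "Nseq n i = i"
proof -
  have "Nseq n i = (\<Prod>j\<in>{1..n}. if j dvd i then hseq j else 1)"
    unfolding Nseq_def Bseqc_def using assms by (intro prod.cong) auto
  also have "\<dots> = (\<Prod>j\<in>{1..n} \<inter> {j. j dvd i}. hseq j)"
    by (simp add: prod.If_cases)
  also have "{1..n} \<inter> {j. j dvd i} = {j. j dvd i}"
  proof -
    have "j \<in> {1..n}" if "j dvd i" for j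
    proof -
      have "0 < j" using dvd_pos_nat[OF _ that] assms by simp
      moreover have "j \<le> i" using dvd_imp_le[OF that] assms by simp
      ultimately show ?thesis using assms by simp
    qed
    then show ?thesis by blast
  qed
  also have "(\<Prod>j | j dvd i. hseq j) = i"
    using assms by (simp add: prod_hseq_divisors)
  finally show ?thesis .
qed

theorem mainTheorem12:
  shows "(\<forall>n\<ge>1. cobweb_admissible (Nseq n) \<and> (\<forall>i\<in>{1..n}. Nseq n i = i))
         \<and> (\<forall>i\<ge>1. (\<lambda>n. real (Nseq n i)) \<longlonglongrightarrow> real i)"
proof (intro conjI allI impI ballI)
  fix n :: nat
  show "cobweb_admissible (Nseq n)"
    unfolding Nseq_def by (intro cobweb_admissible_prod cobweb_admissible_Bseqc)
next
  fix n i :: nat assume "i \<in> {1..n}"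
  then show "Nseq n i = i" by (simp add: Nseq_eq_index)
next
  fix i :: nat assume "i \<ge> 1"
  then have "\<forall>n\<ge>i. real (Nseq n i) = real i" by (simp add: Nseq_eq_index)
  then have "eventually (\<lambda>n. real (Nseq n i) = real i) sequentially"
    unfolding eventually_sequentially by blast
  then show "(\<lambda>n. real (Nseq n i)) \<longlonglongrightarrow> real i"
    by (rule tendsto_eventually)
qed

end
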